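(* Let $p_1$ and $p_2$ be probability densities on $\mathbb{R}^n$, and for $\omega\in[0,1]$ define \[ \zeta^h(\omega)=\int_{\mathbb{R}^n}\frac{p_1(\mathbf{x})\,p_2(\mathbf{x})}{(1-\omega)\,p_1(\mathbf{x})+\omega\, p_2(\mathbf{x})}\,d\mathbf{x}. \] Then $\omega\mapsto\zeta^h(\omega)$ is a convex function on $[0,1]$, and $\zeta^h(\omega)\le 1$ for all $0\le\omega\le 1$.
   Context: $\zeta^h(\omega)$ is the normalization constant of the (weighted) harmonic mean density of $p_1$ and $p_2$: the unnormalized harmonic mean is $\mathcal{M}^h_\omega\{p_1,p_2\}(\mathbf{x})=\frac{p_1(\mathbf{x})p_2(\mathbf{x})}{(1-\omega)p_1(\mathbf{x})+\omega p_2(\mathbf{x})}$, where the integrand is taken to be $0$ at points where its numerator vanishes. *)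

theory Defs
  imports "HOL-Analysis.Analysis"
begin

definition prob_density :: "('a::euclidean_space \<Rightarrow> real) \<Rightarrow> bool" where
  "prob_density p \<longleftrightarrow> p \<in> borel_measurable lborel \<and> (\<forall>x. 0 \<le> p x)
     \<and> integrable lborel p \<and> (\<integral>x. p x \<partial>lborel) = 1"

text \<open>Unnormalized weighted harmonic mean, taken to be 0 where the numerator vanishes.\<close>
definition harm_mean :: "real \<Rightarrow> ('a \<Rightarrow> real) \<Rightarrow> ('a \<Rightarrow> real) \<Rightarrow> 'a \<Rightarrow> real" where
  "harm_mean \<omega> p1 p2 x =
     (if p1 x * p2 x = 0 then 0 else p1 x * p2 x / ((1 - \<omega>) * p1 x + \<omega> * p2 x))"

definition zeta_h :: "('a::euclidean_space \<Rightarrow> real) \<Rightarrow> ('a \<Rightarrow> real) \<Rightarrow> real \<Rightarrow> real" where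
  "zeta_h p1 p2 \<omega> = (\<integral>x. harm_mean \<omega> p1 p2 x \<partial>lborel)"

end

theory Submission
  imports Defs
begin

text \<open>Away from the zeros of \<open>p1 p2\<close>, the integrand is \<open>p1 p2 / L(\<omega>)\<close> with \<open>L\<close> affine and
  positive in \<open>\<omega>\<close>, hence convex in \<open>\<omega>\<close> because \<open>1/L\<close> is; convexity survives integration.
  Pointwise it is a weighted harmonic mean of \<open>p2\<close> and \<open>p1\<close>, so it is bounded by the
  arithmetic mean \<open>(1 - \<omega>) p2 + \<omega> p1\<close>, whose integral is \<open>1\<close>.\<close>

lemma convex_combination_pos:
  fixes a b w :: real
  assumes "0 < a" "0 < b" "0 \<le> w" "w \<le> 1"
  shows "0 < (1 - w) * a + w * b"
  using assms by (cases "w = 1") (auto intro: add_pos_nonneg)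

lemma harm_mean_nonneg:
  assumes "0 \<le> p x" "0 \<le> q x" "0 \<le> w" "w \<le> 1"
  shows "0 \<le> harm_mean w p q x"
  using assms convex_combination_pos[of "p x" "q x" w]
  by (auto simp: harm_mean_def less_eq_real_def)

lemma harm_mean_le_arith_mean:
  assumes "0 \<le> p x" "0 \<le> q x" "0 \<le> w" "w \<le> 1"
  shows "harm_mean w p q x \<le> (1 - w) * q x + w * p x"
proof (cases "p x * q x = 0")
  case True
  then show ?thesis using assms by (simp add: harm_mean_def)
next
  case False
  then have pos: "0 < p x" "0 < q x" using assms by (auto simp: less_eq_real_def)
  have L: "0 < (1 - w) * p x + w * q x"
    using convex_combination_pos[OF pos assms(3,4)] .
  have "((1 - w) * p x + w * q x) * ((1 - w) * q x + w * p x) - p x * q x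
      = w * (1 - w) * (p x - q x)\<^sup>2"
    by (simp add: algebra_simps power2_eq_square)
  moreover have "0 \<le> w * (1 - w) * (p x - q x)\<^sup>2" using assms by simp
  ultimately have "p x * q x \<le> ((1 - w) * p x + w * q x) * ((1 - w) * q x + w * p x)"
    by linarith
  then show ?thesis using False L by (simp add: harm_mean_def divide_le_eq mult.commute)
qed

lemma convex_on_harm_mean:
  assumes "0 \<le> p x" "0 \<le> q x"
  shows "convex_on {0..1} (\<lambda>w. harm_mean w p q x)"
proof (cases "p x * q x = 0")
  case True
  then show ?thesis by (simp add: harm_mean_def convex_on_const)
next
  case False
  then have pos: "0 < p x" "0 < q x" using assms by (auto simp: less_eq_real_def)
  define L where "L w = (1 - w) * p x + w * q x" for w
  have L_pos: "0 < L w" if "w \<in> {0..1}" for w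
    using convex_combination_pos[OF pos] that by (simp add: L_def)
  have L_affine: "L ((1 - t) * u + t * v) = (1 - t) * L u + t * L v" for t u v
    by (simp add: L_def algebra_simps)
  have hm: "harm_mean w p q x = p x * q x * inverse (L w)" for w
    using False by (simp add: harm_mean_def L_def divide_inverse)
  show ?thesis
  proof (rule convex_onI)
    fix t u v :: real
    assume t: "0 < t" "t < 1" and uv: "u \<in> {0..1}" "v \<in> {0..1}"
    have "inverse ((1 - t) *\<^sub>R L u + t *\<^sub>R L v) \<le> (1 - t) * inverse (L u) + t * inverse (L v)"
      using t L_pos[OF uv(1)] L_pos[OF uv(2)]
      by (intro convex_onD[OF convex_on_inverse[of "{0<..}"]]) auto
    then have "p x * q x * inverse (L ((1 - t) * u + t * v))
        \<le> p x * q x * ((1 - t) * inverse (L u) + t * inverse (L v))"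
      using pos by (simp add: L_affine)
    then show "harm_mean ((1 - t) *\<^sub>R u + t *\<^sub>R v) p q x
        \<le> (1 - t) * harm_mean u p q x + t * harm_mean v p q x"
      by (simp add: hm algebra_simps)
  qed (rule convex_real_interval)
qed

lemma convex_on_integral:
  fixes f :: "'s::real_vector \<Rightarrow> 'a \<Rightarrow> real"
  assumes "convex S"
    and "\<And>x. x \<in> space M \<Longrightarrow> convex_on S (\<lambda>s. f s x)"
    and "\<And>s. s \<in> S \<Longrightarrow> integrable M (f s)"
  shows "convex_on S (\<lambda>s. \<integral>x. f s x \<partial>M)"
proof (rule convex_onI[OF _ assms(1)])
  fix t :: real and u v
  assume t: "0 < t" "t < 1" and uv: "u \<in> S" "v \<in> S"
  then have "(1 - t) *\<^sub>R u + t *\<^sub>R v \<in> S"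
    using assms(1) by (simp add: convex_def)
  then have "(\<integral>x. f ((1 - t) *\<^sub>R u + t *\<^sub>R v) x \<partial>M) \<le> (\<integral>x. (1 - t) * f u x + t * f v x \<partial>M)"
    using t uv assms(2,3) by (intro integral_mono convex_onD) auto
  also have "\<dots> = (1 - t) * (\<integral>x. f u x \<partial>M) + t * (\<integral>x. f v x \<partial>M)"
    using uv assms(3) by simp
  finally show "(\<integral>x. f ((1 - t) *\<^sub>R u + t *\<^sub>R v) x \<partial>M)
      \<le> (1 - t) * (\<integral>x. f u x \<partial>M) + t * (\<integral>x. f v x \<partial>M)" .
qed

lemma borel_measurable_harm_mean [measurable]:
  fixes M :: "'a::euclidean_space measure"
  assumes [measurable]: "p \<in> borel_measurable M" "q \<in> borel_measurable M"
  shows "harm_mean w p q \<in> borel_measurable M"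
  unfolding harm_mean_def[abs_def] by measurable

lemma integrable_harm_mean:
  fixes M :: "'a::euclidean_space measure"
  assumes "integrable M p" "integrable M q" "\<And>x. 0 \<le> p x" "\<And>x. 0 \<le> q x" "0 \<le> w" "w \<le> 1"
  shows "integrable M (harm_mean w p q)"
proof (rule Bochner_Integration.integrable_bound[where f="\<lambda>x. (1 - w) * q x + w * p x"])
  show "integrable M (\<lambda>x. (1 - w) * q x + w * p x)" using assms by simp
  show "harm_mean w p q \<in> borel_measurable M" using assms by simp
  show "AE x in M. norm (harm_mean w p q x) \<le> norm ((1 - w) * q x + w * p x)"
    using harm_mean_nonneg[of p _ q w] harm_mean_le_arith_mean[of p _ q w] assms
    by (intro AE_I2) simp
qed

lemma integral_harm_mean_le:
  fixes M :: "'a::euclidean_space measure"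
  assumes "integrable M p" "integrable M q" "\<And>x. 0 \<le> p x" "\<And>x. 0 \<le> q x" "0 \<le> w" "w \<le> 1"
  shows "(\<integral>x. harm_mean w p q x \<partial>M) \<le> (1 - w) * (\<integral>x. q x \<partial>M) + w * (\<integral>x. p x \<partial>M)"
proof -
  have "(\<integral>x. harm_mean w p q x \<partial>M) \<le> (\<integral>x. (1 - w) * q x + w * p x \<partial>M)"
    using assms by (intro integral_mono integrable_harm_mean harm_mean_le_arith_mean) auto
  then show ?thesis using assms by simp
qed

theorem theorem2:
  fixes p1 p2 :: "'a::euclidean_space \<Rightarrow> real"
  assumes "prob_density p1" and "prob_density p2"
  shows "convex_on {0..1} (zeta_h p1 p2) \<and> (\<forall>\<omega>\<in>{0..1}. zeta_h p1 p2 \<omega> \<le> 1)"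
proof -
  have int: "integrable lborel p1" "integrable lborel p2"
    and nonneg: "\<And>x. 0 \<le> p1 x" "\<And>x. 0 \<le> p2 x"
    and total: "(\<integral>x. p1 x \<partial>lborel) = 1" "(\<integral>x. p2 x \<partial>lborel) = 1"
    using assms by (auto simp: prob_density_def)
  have "convex_on {0..1} (zeta_h p1 p2)"
    unfolding zeta_h_def[abs_def]
    using int nonneg
    by (intro convex_on_integral convex_on_harm_mean integrable_harm_mean) auto
  moreover have "zeta_h p1 p2 \<omega> \<le> 1" if "\<omega> \<in> {0..1}" for \<omega>
    using integral_harm_mean_le[OF int nonneg, of \<omega>] that total
    by (simp add: zeta_h_def)
  ultimately show ?thesis by blast
qed

end
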